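(* Let $d\ge3$, $\beta>0$. For an integer $\ell\ge1$ let $C_\ell$ be the number of cycles of length $\ell$ in $\mathbf{G}^*$. Then for any fixed integer $L$, $\sum_{\ell\le L}C_\ell=O(\log n)$ with high probability.
   Context: $V_n=\{v_1,\dots,v_n\}$, $dn$ even. Pairing model: $\Gamma$ is a uniformly random perfect matching of the clone set $V_n\times[d]$ and $\mathbf{G}$ the $d$-regular multigraph on $V_n$ obtained by contracting clones of each vertex. For a multigraph $G$, $\mathcal{H}_G(\sigma)=\sum_{\{v,w\}\in E(G)}\frac{1+\sigma_v\sigma_w}{2}$ (edges with multiplicity, loops joining equal spins). $\mathbf{G}^*$: draw $\sigma^*\in\{\pm1\}^{V_n}$ uniformly, then draw $\mathbf{G}^*$ among the possible outcomes $G$ of $\mathbf{G}$ with $\Pr[\mathbf{G}^*=G\mid\sigma^*]\propto\exp(-\beta\mathcal{H}_G(\sigma^* ))$. "With high probability" means with probability tending to $1$ as $n\to\infty$. *)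

theory Defs
  imports Complex_Main "HOL-Library.FuncSet"
begin

definition clones :: "nat \<Rightarrow> nat \<Rightarrow> (nat \<times> nat) set" where
  "clones n d = {..<n} \<times> {..<d}"

text \<open>Perfect matchings of the clone set, as fixed-point-free involutions
  (extensional outside the clone set).\<close>

definition matchings :: "nat \<Rightarrow> nat \<Rightarrow> ((nat \<times> nat) \<Rightarrow> (nat \<times> nat)) set" where
  "matchings n d = {m \<in> clones n d \<rightarrow>\<^sub>E clones n d.
      \<forall>x \<in> clones n d. m x \<noteq> x \<and> m (m x) = x}"

text \<open>A multigraph on vertex set 0..<n is given by its multiplicity function
  A v w (symmetric; A v v = number of loops at v). Contraction of a matching:\<close>

definition graph_of :: "nat \<Rightarrow> nat \<Rightarrow> ((nat \<times> nat) \<Rightarrow> (nat \<times> nat)) \<Rightarrow> nat \<Rightarrow> nat \<Rightarrow> nat" where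
  "graph_of n d m v w = (if v < n \<and> w < n then
      card {(i, j). i < d \<and> j < d \<and> m (v, i) = (w, j) \<and> (v = w \<longrightarrow> i < j)}
    else 0)"

definition outcomes :: "nat \<Rightarrow> nat \<Rightarrow> (nat \<Rightarrow> nat \<Rightarrow> nat) set" where
  "outcomes n d = graph_of n d ` matchings n d"

definition spins :: "nat \<Rightarrow> (nat \<Rightarrow> int) set" where
  "spins n = {..<n} \<rightarrow>\<^sub>E {-1, 1}"

definition hamiltonian :: "nat \<Rightarrow> (nat \<Rightarrow> nat \<Rightarrow> nat) \<Rightarrow> (nat \<Rightarrow> int) \<Rightarrow> real" where
  "hamiltonian n A \<sigma> = (\<Sum>v<n. \<Sum>w<n. if v \<le> w then
      real (A v w) * (1 + real_of_int (\<sigma> v * \<sigma> w)) / 2 else 0)"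

text \<open>Probability that the planted graph G* satisfies P: sigma* uniform, then
  Pr[G* = G | sigma*] proportional to exp(-beta H_G(sigma*)) over the outcomes G.\<close>

definition planted_prob :: "nat \<Rightarrow> nat \<Rightarrow> real \<Rightarrow> ((nat \<Rightarrow> nat \<Rightarrow> nat) \<Rightarrow> bool) \<Rightarrow> real" where
  "planted_prob n d \<beta> P = (\<Sum>\<sigma>\<in>spins n. (1 / real (card (spins n))) *
      ((\<Sum>G\<in>{G \<in> outcomes n d. P G}. exp (- \<beta> * hamiltonian n G \<sigma>)) /
       (\<Sum>G\<in>outcomes n d. exp (- \<beta> * hamiltonian n G \<sigma>))))"

definition edge_insts :: "nat \<Rightarrow> (nat \<Rightarrow> nat \<Rightarrow> nat) \<Rightarrow> (nat \<times> nat \<times> nat) set" where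
  "edge_insts n A = {(v, w, k). v \<le> w \<and> w < n \<and> k < A v w}"

text \<open>A set S of edge instances is a cycle of length l if its edges can be listed
  as e_0, ..., e_(l-1) joining x_i and x_(i+1 mod l) for distinct vertices x_0..x_(l-1).
  (Length 1: a loop; length 2: two parallel edges.)\<close>

definition is_cycle :: "nat \<Rightarrow> (nat \<times> nat \<times> nat) set \<Rightarrow> bool" where
  "is_cycle l S = (\<exists>x g. inj_on x {..<l} \<and> bij_betw g {..<l} S \<and>
      (\<forall>i<l. (case g i of (v, w, k) \<Rightarrow> {v, w} = {x i, x ((i + 1) mod l)})))"

definition num_cycles :: "nat \<Rightarrow> (nat \<Rightarrow> nat \<Rightarrow> nat) \<Rightarrow> nat \<Rightarrow> nat" where
  "num_cycles n A l = card {S. S \<subseteq> edge_insts n A \<and> is_cycle l S}"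

end

(*
  The outcomes of the pairing model are exactly the d-regular multigraphs (a loop counting twice
  towards the degree), and for a fixed spin configuration the planted law is the Gibbs measure
  exp (-beta H) on them. A switching replaces two edges xy, ab by xa, yb and changes H by at most 2.
  Switching a prescribed edge xy away has at least n/2 forward choices of ab and at most d^2
  backward ones, so the Gibbs weight of the graphs containing k prescribed edges is at most
  (2 e^(2 beta) d^2 / n)^k times the total weight. Summing over the n^l closed walks of length l
  and the d^l choices among parallel edges, the Gibbs mean of the number of cycles of length at
  most L is bounded by a constant K independent of n, and Markov's inequality bounds the weight
  of the graphs with more than ln n such cycles by K / ln n, for every spin configuration.
*)

theory Submission
  imports Defs
begin

definition regular_multigraph :: "nat \<Rightarrow> nat \<Rightarrow> (nat \<Rightarrow> nat \<Rightarrow> nat) \<Rightarrow> bool" where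
  "regular_multigraph n d A \<longleftrightarrow> (\<forall>v w. A v w = A w v) \<and> (\<forall>v w. \<not> (v < n \<and> w < n) \<longrightarrow> A v w = 0)
     \<and> (\<forall>v<n. (\<Sum>w<n. A v w) + A v v = d)"

lemma regular_multigraph_degree:
  "regular_multigraph n d A \<Longrightarrow> v < n \<Longrightarrow> (\<Sum>w<n. A v w) + A v v = d"
  unfolding regular_multigraph_def by blast

lemma clones_iff [simp]: "(v, i) \<in> clones n d \<longleftrightarrow> v < n \<and> i < d"
  by (simp add: clones_def)

lemma matchingsD:
  assumes "m \<in> matchings n d" "p \<in> clones n d"
  shows "m p \<in> clones n d" "m p \<noteq> p" "m (m p) = p"
  using assms unfolding matchings_def by auto

lemma card_fibres_sum:
  assumes "finite S" "finite T" "f ` S \<subseteq> T"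
  shows "card S = (\<Sum>y\<in>T. card {x \<in> S. f x = y})"
proof -
  have "(\<Sum>y\<in>T. \<Sum>x\<in>{x \<in> S. f x = y}. 1::nat) = (\<Sum>x\<in>S. 1)"
    by (rule sum.group[OF assms])
  then show ?thesis by simp
qed

lemma matching_partner_bounds:
  assumes "m \<in> matchings n d" "v < n" "i < d"
  shows "fst (m (v, i)) < n" "snd (m (v, i)) < d"
  using matchingsD(1)[OF assms(1), of "(v, i)"] assms(2,3) by (auto simp: clones_def mem_Times_iff)

definition clone_pairs :: "nat \<Rightarrow> (nat \<times> nat \<Rightarrow> nat \<times> nat) \<Rightarrow> nat \<Rightarrow> nat \<Rightarrow> (nat \<times> nat) set" where
  "clone_pairs d m v w = {(i, j). i < d \<and> j < d \<and> m (v, i) = (w, j)}"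

lemma graph_of_eq_card_clone_pairs:
  "v < n \<Longrightarrow> w < n \<Longrightarrow> graph_of n d m v w = card {p \<in> clone_pairs d m v w. v = w \<longrightarrow> fst p < snd p}"
  unfolding graph_of_def clone_pairs_def by (auto intro!: arg_cong[where f = card])

lemma card_clone_pairs:
  assumes m: "m \<in> matchings n d" and v: "v < n"
  shows "card (clone_pairs d m v w) = card {i. i < d \<and> fst (m (v, i)) = w}"
proof -
  have "clone_pairs d m v w = (\<lambda>i. (i, snd (m (v, i)))) ` {i. i < d \<and> fst (m (v, i)) = w}"
  proof (intro set_eqI iffI)
    fix p assume "p \<in> (\<lambda>i. (i, snd (m (v, i)))) ` {i. i < d \<and> fst (m (v, i)) = w}"
    then obtain i where "p = (i, snd (m (v, i)))" "i < d" "fst (m (v, i)) = w" by auto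
    then show "p \<in> clone_pairs d m v w"
      using matching_partner_bounds[OF m v] by (auto simp: clone_pairs_def prod_eq_iff)
  qed (auto simp: clone_pairs_def image_iff)
  then show ?thesis by (simp add: card_image inj_on_def)
qed

lemma swap_clone_pairs:
  assumes m: "m \<in> matchings n d" and "v < n" "w < n"
  shows "prod.swap ` clone_pairs d m v w = clone_pairs d m w v"
  using assms matchingsD(3)[OF m] unfolding clone_pairs_def by (force simp: image_iff)

lemma graph_of_sym:
  assumes m: "m \<in> matchings n d"
  shows "graph_of n d m v w = graph_of n d m w v"
proof (cases "v < n \<and> w < n \<and> v \<noteq> w")
  case True
  then have "card (clone_pairs d m w v) = card (clone_pairs d m v w)"
    by (metis swap_clone_pairs[OF m] card_image inj_on_def swap_swap)
  with True show ?thesis by (simp add: graph_of_eq_card_clone_pairs)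
qed (auto simp: graph_of_def)

lemma card_loop_clone_pairs:
  assumes m: "m \<in> matchings n d" and v: "v < n"
  shows "card (clone_pairs d m v v) = 2 * graph_of n d m v v"
proof -
  define P where "P = clone_pairs d m v v"
  define Lo where "Lo = {p \<in> P. fst p < snd p}"
  have fin: "finite P" unfolding P_def clone_pairs_def
    by (rule finite_subset[of _ "{..<d} \<times> {..<d}"]) auto
  \<comment> \<open>a loop never joins a clone to itself, and the two orientations of a loop are swapped\<close>
  have "P = Lo \<union> prod.swap ` Lo"
    using swap_clone_pairs[OF m v v] matchingsD(2)[OF m] v
    unfolding P_def Lo_def clone_pairs_def by (force simp: image_iff)
  moreover have "Lo \<inter> prod.swap ` Lo = {}" unfolding Lo_def by auto
  moreover have "card (prod.swap ` Lo) = card Lo" by (simp add: card_image)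
  ultimately have "card P = 2 * card Lo"
    using fin by (metis card_Un_disjoint finite_Un mult_2)
  then show ?thesis using v by (simp add: P_def Lo_def graph_of_eq_card_clone_pairs)
qed

lemma card_clones_matched_into:
  assumes m: "m \<in> matchings n d" and "v < n" "w < n"
  shows "card {i. i < d \<and> fst (m (v, i)) = w} =
    (if v = w then 2 * graph_of n d m v v else graph_of n d m v w)"
  using assms card_clone_pairs[OF m] card_loop_clone_pairs[OF m]
  by (simp add: graph_of_eq_card_clone_pairs)

lemma regular_multigraph_graph_of:
  assumes m: "m \<in> matchings n d"
  shows "regular_multigraph n d (graph_of n d m)"
proof -
  have "(\<Sum>w<n. graph_of n d m v w) + graph_of n d m v v = d" if v: "v < n" for v
  proof -
    have "card {..<d} = (\<Sum>w<n. card {i \<in> {..<d}. fst (m (v, i)) = w})"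
      using matching_partner_bounds[OF m v] by (intro card_fibres_sum) auto
    also have "\<dots> = (\<Sum>w<n. graph_of n d m v w + (if w = v then graph_of n d m v v else 0))"
      using card_clones_matched_into[OF m v] by (intro sum.cong) (auto simp: Collect_conj_eq lessThan_def)
    also have "\<dots> = (\<Sum>w<n. graph_of n d m v w) + graph_of n d m v v"
      using v by (simp add: sum.distrib)
    finally show ?thesis by simp
  qed
  then show ?thesis
    unfolding regular_multigraph_def using graph_of_sym[OF m] by (auto simp: graph_of_def)
qed

text \<open>A half-edge \<open>(w, k, s)\<close> at \<open>v\<close> is an end of the \<open>k\<close>-th edge between \<open>v\<close> and \<open>w\<close>;
  the flag \<open>s\<close> distinguishes the two ends of a loop.\<close>

definition half_edges :: "nat \<Rightarrow> (nat \<Rightarrow> nat \<Rightarrow> nat) \<Rightarrow> nat \<Rightarrow> (nat \<times> nat \<times> bool) set" where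
  "half_edges n A v = {(w, k, s). w < n \<and> k < A v w \<and> (s \<longrightarrow> w = v)}"

definition twin :: "nat \<Rightarrow> nat \<times> nat \<times> bool \<Rightarrow> nat \<times> nat \<times> bool" where
  "twin v h = (case h of (w, k, s) \<Rightarrow> (v, k, if w = v then \<not> s else s))"

lemma finite_half_edges: "finite (half_edges n A v)"
proof -
  have "half_edges n A v \<subseteq> (SIGMA w:{..<n}. {..<A v w} \<times> UNIV)"
    unfolding half_edges_def by auto
  moreover have "finite (SIGMA w:{..<n}. {..<A v w} \<times> (UNIV :: bool set))" by auto
  ultimately show ?thesis by (rule finite_subset)
qed

lemma card_half_edges_to:
  assumes "w < n"
  shows "card {h \<in> half_edges n A v. fst h = w} = (if w = v then 2 * A v v else A v w)"
proof -
  have "{h \<in> half_edges n A v. fst h = w} = {w} \<times> {..<A v w} \<times> {s. s \<longrightarrow> w = v}"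
    using assms unfolding half_edges_def by auto
  moreover have "{s. s \<longrightarrow> w = v} = (if w = v then UNIV else {False})" by auto
  ultimately show ?thesis by (simp add: card_cartesian_product)
qed

lemma card_half_edges:
  assumes "regular_multigraph n d A" "v < n"
  shows "card (half_edges n A v) = d"
proof -
  have "card (half_edges n A v) = (\<Sum>w<n. card {h \<in> half_edges n A v. fst h = w})"
    using finite_half_edges by (rule card_fibres_sum) (auto simp: half_edges_def)
  also have "\<dots> = (\<Sum>w<n. A v w + (if w = v then A v v else 0))"
    by (intro sum.cong) (auto simp: card_half_edges_to)
  also have "\<dots> = d"
    using assms by (simp add: sum.distrib regular_multigraph_degree)
  finally show ?thesis .
qed

lemma twin_half_edge:
  assumes "regular_multigraph n d A" "v < n" "h \<in> half_edges n A v"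
  shows "twin v h \<in> half_edges n A (fst h)" "twin (fst h) (twin v h) = h"
    "fst (twin v h) = v" "fst h = v \<Longrightarrow> twin v h \<noteq> h"
  using assms unfolding regular_multigraph_def half_edges_def twin_def by (auto split: prod.splits)

definition half_edge_label :: "nat \<Rightarrow> nat \<Rightarrow> (nat \<Rightarrow> nat \<Rightarrow> nat) \<Rightarrow> nat \<Rightarrow> nat \<Rightarrow> nat \<times> nat \<times> bool" where
  "half_edge_label n d A v = (SOME f. bij_betw f {..<d} (half_edges n A v))"

lemma bij_half_edge_label:
  assumes "regular_multigraph n d A" "v < n"
  shows "bij_betw (half_edge_label n d A v) {..<d} (half_edges n A v)"
proof -
  have "\<exists>f. bij_betw f {..<d} (half_edges n A v)"
    using ex_bij_betw_nat_finite[OF finite_half_edges] card_half_edges[OF assms]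
    by (metis atLeast0LessThan)
  then show ?thesis unfolding half_edge_label_def by (rule someI_ex)
qed

text \<open>The configuration realising \<open>A\<close>: clone \<open>i\<close> of \<open>v\<close> carries the \<open>i\<close>-th half-edge at
  \<open>v\<close> and is matched to the clone carrying its twin.\<close>

definition matching_of :: "nat \<Rightarrow> nat \<Rightarrow> (nat \<Rightarrow> nat \<Rightarrow> nat) \<Rightarrow> nat \<times> nat \<Rightarrow> nat \<times> nat" where
  "matching_of n d A p = (case p of (v, i) \<Rightarrow>
     if v < n \<and> i < d then
       (let h = half_edge_label n d A v i
        in (fst h, inv_into {..<d} (half_edge_label n d A (fst h)) (twin v h)))
     else undefined)"

lemma matching_of_label:
  assumes A: "regular_multigraph n d A" and v: "v < n" and i: "i < d"
  defines "h \<equiv> half_edge_label n d A v i"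
  defines "j \<equiv> inv_into {..<d} (half_edge_label n d A (fst h)) (twin v h)"
  shows "matching_of n d A (v, i) = (fst h, j)" "fst h < n" "j < d"
    "half_edge_label n d A (fst h) j = twin v h"
proof -
  have h: "h \<in> half_edges n A v"
    using bij_half_edge_label[OF A v] i unfolding h_def by (auto dest: bij_betwE)
  then show w: "fst h < n" by (auto simp: half_edges_def)
  have "twin v h \<in> half_edge_label n d A (fst h) ` {..<d}"
    using bij_half_edge_label[OF A w] twin_half_edge(1)[OF A v h] by (simp add: bij_betw_def)
  from inv_into_into[OF this] f_inv_into_f[OF this]
  show "j < d" "half_edge_label n d A (fst h) j = twin v h"
    unfolding j_def by auto
  show "matching_of n d A (v, i) = (fst h, j)"
    using v i unfolding matching_of_def h_def j_def by (simp add: Let_def)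
qed

lemma matching_of_in_matchings:
  assumes A: "regular_multigraph n d A"
  shows "matching_of n d A \<in> matchings n d"
  unfolding matchings_def
proof (intro CollectI conjI ballI PiE_I)
  fix p assume "p \<notin> clones n d"
  then show "matching_of n d A p = undefined" by (auto simp: matching_of_def split: prod.splits)
next
  fix p assume "p \<in> clones n d"
  then obtain v i where p: "p = (v, i)" "v < n" "i < d" by (cases p) auto
  define h where "h = half_edge_label n d A v i"
  obtain j where M: "matching_of n d A (v, i) = (fst h, j)" "fst h < n" "j < d"
    "half_edge_label n d A (fst h) j = twin v h"
    using matching_of_label[OF A p(2,3)] unfolding h_def by blast
  have h: "h \<in> half_edges n A v"
    using bij_half_edge_label[OF A p(2)] p(3) unfolding h_def by (auto dest: bij_betwE)
  show "matching_of n d A p \<in> clones n d" using M p by simp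
  have "matching_of n d A (fst h, j) = (v, inv_into {..<d} (half_edge_label n d A v) h)"
    using matching_of_label(1)[OF A M(2,3)] M(4) twin_half_edge[OF A p(2) h] by simp
  also have "inv_into {..<d} (half_edge_label n d A v) h = i"
    using bij_half_edge_label[OF A p(2)] p(3) unfolding h_def
    by (auto simp: bij_betw_def inv_into_f_f)
  finally show "matching_of n d A (matching_of n d A p) = p" using M p by simp
  show "matching_of n d A p \<noteq> p"
    using M p twin_half_edge(4)[OF A p(2) h] h_def by auto
qed

lemma graph_of_matching_of:
  assumes A: "regular_multigraph n d A"
  shows "graph_of n d (matching_of n d A) = A"
proof (intro ext)
  fix v w
  let ?m = "matching_of n d A"
  show "graph_of n d ?m v w = A v w"
  proof (cases "v < n \<and> w < n")
    case True
    then have v: "v < n" and w: "w < n" by auto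
    have "{i. i < d \<and> fst (?m (v, i)) = w} = {i \<in> {..<d}. fst (half_edge_label n d A v i) = w}"
      using matching_of_label(1)[OF A v] by auto
    also have "card \<dots> = card {h \<in> half_edges n A v. fst h = w}"
      by (rule bij_betw_same_card, rule bij_betw_Collect[OF bij_half_edge_label[OF A v]]) simp
    finally show ?thesis
      using card_clones_matched_into[OF matching_of_in_matchings[OF A] v w] card_half_edges_to[OF w]
      by (auto split: if_splits)
  next
    case False
    then show ?thesis using A by (auto simp: graph_of_def regular_multigraph_def)
  qed
qed

lemma outcomes_eq_regular_multigraphs: "outcomes n d = {A. regular_multigraph n d A}"
proof (intro set_eqI iffI)
  fix A assume "A \<in> {A. regular_multigraph n d A}"
  then have "A = graph_of n d (matching_of n d A)" "matching_of n d A \<in> matchings n d"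
    by (simp_all add: graph_of_matching_of matching_of_in_matchings)
  then show "A \<in> outcomes n d" unfolding outcomes_def by blast
qed (auto simp: outcomes_def regular_multigraph_graph_of)

lemma finite_outcomes: "finite (outcomes n d)"
proof -
  have "finite (clones n d \<rightarrow>\<^sub>E clones n d)" by (simp add: clones_def finite_PiE)
  then have "finite (matchings n d)" unfolding matchings_def by simp
  then show ?thesis unfolding outcomes_def by simp
qed

text \<open>Every vertex gets \<open>\<lfloor>d/2\<rfloor>\<close> loops; for odd \<open>d\<close> (hence even \<open>n\<close>) the vertices
  \<open>2k\<close> and \<open>2k + 1\<close> are moreover joined by an edge.\<close>

lemma regular_multigraph_exists:
  assumes "even (d * n)"
  shows "\<exists>A. regular_multigraph n d A"
proof -
  define A where "A = (\<lambda>v w. if v < n \<and> w < n then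
    (if v = w then d div 2 else if odd d \<and> v div 2 = w div 2 then 1 else 0) else (0::nat))"
  have "(\<Sum>w<n. A v w) + A v v = d" if v: "v < n" for v
  proof -
    define partner where "partner = (if even v then v + 1 else v - 1)"
    have partner: "{w. w < n \<and> odd d \<and> w \<noteq> v \<and> w div 2 = v div 2} = {partner}" if "odd d"
    proof -
      have "even n" using assms that by simp
      then show ?thesis using v that unfolding partner_def by (auto elim!: evenE oddE)
    qed
    have "(\<Sum>w<n. A v w) = (\<Sum>w<n. (if w = v then d div 2 else 0)
        + (if odd d \<and> w \<noteq> v \<and> w div 2 = v div 2 then 1 else 0))"
      by (intro sum.cong) (auto simp: A_def v)
    also have "\<dots> = d div 2 + card {w. w < n \<and> odd d \<and> w \<noteq> v \<and> w div 2 = v div 2}"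
      using v by (simp add: sum.distrib sum.If_cases Int_def)
    also have "\<dots> = d div 2 + (if odd d then 1 else 0)"
      using partner by auto
    finally show ?thesis using v by (simp add: A_def) presburger
  qed
  then have "regular_multigraph n d A" unfolding regular_multigraph_def by (auto simp: A_def)
  then show ?thesis by blast
qed

definition single_edge :: "nat \<Rightarrow> nat \<Rightarrow> nat \<Rightarrow> nat \<Rightarrow> nat" where
  "single_edge p q v w = (if {v, w} = {p, q} then 1 else 0)"

text \<open>The truncated subtraction is exact when \<open>xy\<close> and \<open>ab\<close> are edges of \<open>A\<close>
  (lemma \<open>switch_add_removed_edges\<close>).\<close>

definition switch :: "(nat \<Rightarrow> nat \<Rightarrow> nat) \<Rightarrow> nat \<Rightarrow> nat \<Rightarrow> nat \<Rightarrow> nat \<Rightarrow> nat \<Rightarrow> nat \<Rightarrow> nat" where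
  "switch A x y a b v w =
     A v w + single_edge x a v w + single_edge y b v w - single_edge x y v w - single_edge a b v w"

lemma single_edge_sym: "single_edge p q v w = single_edge p q w v"
  unfolding single_edge_def by (simp add: insert_commute)

lemma single_edge_degree:
  assumes "p < n" "q < n" "v < n"
  shows "(\<Sum>w<n. single_edge p q v w) + single_edge p q v v
    = (if v = p then 1 else 0) + (if v = q then 1 else 0)"
proof -
  have "(\<Sum>w<n. single_edge p q v w) = card {w. w < n \<and> {v, w} = {p, q}}"
    unfolding single_edge_def by (simp add: sum.If_cases Int_def)
  moreover have "{w. w < n \<and> {v, w} = {p, q}} =
      (if v = p then {q} else if v = q then {p} else {})"
    using assms by (auto simp: doubleton_eq_iff)
  ultimately show ?thesis by (auto simp: single_edge_def doubleton_eq_iff)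
qed

lemma switch_add_removed_edges:
  assumes A: "regular_multigraph n d A" and ab: "a \<notin> {x, y}" "b \<notin> {x, y}"
    and edges: "1 \<le> A x y" "1 \<le> A a b"
  shows "switch A x y a b v w + single_edge x y v w + single_edge a b v w
    = A v w + single_edge x a v w + single_edge y b v w"
proof -
  have "single_edge x y v w + single_edge a b v w \<le> A v w"
    using A ab edges unfolding single_edge_def regular_multigraph_def
    by (auto simp: doubleton_eq_iff)
  then show ?thesis unfolding switch_def by simp
qed

lemma regular_multigraph_switch:
  assumes A: "regular_multigraph n d A" and xy: "x < n" "y < n" and ab: "a < n" "b < n"
    "a \<notin> {x, y}" "b \<notin> {x, y}" and edges: "1 \<le> A x y" "1 \<le> A a b"
  shows "regular_multigraph n d (switch A x y a b)"
proof -
  let ?S = "switch A x y a b"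
  note sum_eq = switch_add_removed_edges[OF A ab(3,4) edges]
  have "?S v w = ?S w v" for v w
  proof -
    have "A v w = A w v" using A by (simp add: regular_multigraph_def)
    then show ?thesis by (simp add: switch_def single_edge_sym[of _ _ v w])
  qed
  moreover have "?S v w = 0" if "\<not> (v < n \<and> w < n)" for v w
  proof -
    have "single_edge p q v w = 0" if "p < n" "q < n" for p q
      using that \<open>\<not> (v < n \<and> w < n)\<close> by (auto simp: single_edge_def doubleton_eq_iff)
    then show ?thesis
      using A that xy ab by (simp add: switch_def regular_multigraph_def)
  qed
  moreover have "(\<Sum>w<n. ?S v w) + ?S v v = d" if v: "v < n" for v
  proof -
    define deg where "deg B = (\<Sum>w<n. B v w) + B v v" for B :: "nat \<Rightarrow> nat \<Rightarrow> nat"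
    have deg_add: "deg (\<lambda>v w. B v w + C v w) = deg B + deg C" for B C
      unfolding deg_def by (simp add: sum.distrib)
    have "deg (\<lambda>v w. ?S v w + single_edge x y v w + single_edge a b v w)
        = deg (\<lambda>v w. A v w + single_edge x a v w + single_edge y b v w)"
      using sum_eq by simp
    then have "deg ?S + deg (single_edge x y) + deg (single_edge a b)
        = deg A + deg (single_edge x a) + deg (single_edge y b)"
      by (simp only: deg_add)
    then show ?thesis
      using single_edge_degree[OF _ _ v] xy ab regular_multigraph_degree[OF A v]
      by (simp add: deg_def)
  qed
  ultimately show ?thesis unfolding regular_multigraph_def by blast
qed

lemma switch_new_edges:
  assumes A: "regular_multigraph n d A" and ab: "a \<notin> {x, y}" "b \<notin> {x, y}"
    and edges: "1 \<le> A x y" "1 \<le> A a b"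
  shows "1 \<le> switch A x y a b x a" "1 \<le> switch A x y a b y b"
  using switch_add_removed_edges[OF A ab edges, of x a] switch_add_removed_edges[OF A ab edges, of y b] ab
  by (auto simp: single_edge_def doubleton_eq_iff)

definition edge_mult :: "(nat \<times> nat) list \<Rightarrow> nat \<Rightarrow> nat \<Rightarrow> nat" where
  "edge_mult es p q = (\<Sum>(v, w)\<leftarrow>es. single_edge v w p q)"

definition contains_edges :: "(nat \<times> nat) list \<Rightarrow> (nat \<Rightarrow> nat \<Rightarrow> nat) \<Rightarrow> bool" where
  "contains_edges es A \<longleftrightarrow> (\<forall>p q. edge_mult es p q \<le> A p q)"

definition edge_vertices :: "(nat \<times> nat) list \<Rightarrow> nat set" where
  "edge_vertices es = fst ` set es \<union> snd ` set es"

lemma edge_mult_Nil [simp]: "edge_mult [] p q = 0"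
  by (simp add: edge_mult_def)

lemma edge_mult_Cons [simp]: "edge_mult ((x, y) # es) p q = single_edge x y p q + edge_mult es p q"
  by (simp add: edge_mult_def)

lemma edge_vertices_Cons [simp]:
  "edge_vertices ((x, y) # es) = insert x (insert y (edge_vertices es))"
  by (auto simp: edge_vertices_def)

lemma edge_mult_outside: "p \<notin> edge_vertices es \<Longrightarrow> edge_mult es p q = 0"
  by (induction es) (auto simp: edge_vertices_def single_edge_def doubleton_eq_iff)

lemma card_edge_vertices: "card (edge_vertices es) \<le> 2 * length es"
proof -
  have "card (edge_vertices es) \<le> card (fst ` set es) + card (snd ` set es)"
    unfolding edge_vertices_def by (rule card_Un_le)
  also have "\<dots> \<le> length es + length es"
    by (intro add_mono) (meson card_image_le card_length finite_set le_trans)+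
  finally show ?thesis by simp
qed

lemma contains_edges_Cons_edge:
  "contains_edges ((x, y) # es) A \<Longrightarrow> 1 \<le> A x y"
  unfolding contains_edges_def by (metis edge_mult_Cons single_edge_def le_add1 order_trans)

lemma contains_edges_switch:
  assumes A: "regular_multigraph n d A" and ab: "a \<notin> {x, y}" "b \<notin> {x, y}"
    "a \<notin> edge_vertices es" "b \<notin> edge_vertices es"
    and edge: "1 \<le> A a b" and C: "contains_edges ((x, y) # es) A"
  shows "contains_edges es (switch A x y a b)"
  unfolding contains_edges_def
proof (intro allI)
  fix p q
  have "edge_mult es p q + single_edge x y p q + single_edge a b p q \<le> A p q"
  proof (cases "{p, q} = {a, b}")
    case True
    then have "edge_mult es p q = 0" "A p q = A a b"
      using ab edge_mult_outside A by (auto simp: doubleton_eq_iff regular_multigraph_def)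
    then show ?thesis using True ab edge by (auto simp: single_edge_def)
  next
    case False
    then show ?thesis
      using C[unfolded contains_edges_def, rule_format, of p q] by (simp add: single_edge_def)
  qed
  then show "edge_mult es p q \<le> switch A x y a b p q"
    using switch_add_removed_edges[OF A ab(1,2) contains_edges_Cons_edge[OF C] edge, of p q] by simp
qed

lemma hamiltonian_add:
  "hamiltonian n (\<lambda>v w. A v w + B v w) \<sigma> = hamiltonian n A \<sigma> + hamiltonian n B \<sigma>"
proof -
  have "(if P then real (a + b) * c / 2 else 0) =
      (if P then real a * c / 2 else 0) + (if P then real b * c / 2 else (0::real))" for P a b c
    by (simp add: add_divide_distrib distrib_right)
  then show ?thesis unfolding hamiltonian_def by (simp only: sum.distrib)
qed

lemma hamiltonian_single_edge:
  assumes "\<sigma> \<in> spins n" "p < n" "q < n"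
  shows "0 \<le> hamiltonian n (single_edge p q) \<sigma>" "hamiltonian n (single_edge p q) \<sigma> \<le> 1"
proof -
  define e where "e = (1 + real_of_int (\<sigma> p * \<sigma> q)) / 2"
  have "hamiltonian n (single_edge p q) \<sigma> =
      (\<Sum>v<n. \<Sum>w<n. if v = min p q \<and> w = max p q then e else 0)"
    unfolding hamiltonian_def single_edge_def e_def
    by (intro sum.cong refl) (auto simp: doubleton_eq_iff min_def max_def mult.commute)
  also have "\<dots> = (\<Sum>v<n. if v = min p q then e else 0)"
    using assms(2,3) by (intro sum.cong refl) (simp add: sum.delta')
  also have "\<dots> = e"
    using assms(2,3) by (simp add: sum.delta' min_less_iff_disj)
  finally have H: "hamiltonian n (single_edge p q) \<sigma> = e" .
  have "\<sigma> p \<in> {-1, 1}" "\<sigma> q \<in> {-1, 1}" using assms unfolding spins_def by auto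
  then show "0 \<le> hamiltonian n (single_edge p q) \<sigma>" "hamiltonian n (single_edge p q) \<sigma> \<le> 1"
    unfolding H e_def by auto
qed

text \<open>A switching changes four edges, each contributing between 0 and 1 to the energy.\<close>

lemma hamiltonian_switch_le:
  assumes A: "regular_multigraph n d A" and \<sigma>: "\<sigma> \<in> spins n" and xy: "x < n" "y < n"
    and ab: "a < n" "b < n" "a \<notin> {x, y}" "b \<notin> {x, y}" and edges: "1 \<le> A x y" "1 \<le> A a b"
  shows "hamiltonian n (switch A x y a b) \<sigma> \<le> hamiltonian n A \<sigma> + 2"
proof -
  have add3: "hamiltonian n (\<lambda>v w. B v w + C v w + D v w) \<sigma>
      = hamiltonian n B \<sigma> + hamiltonian n C \<sigma> + hamiltonian n D \<sigma>" for B C D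
    using hamiltonian_add[where A = "\<lambda>v w. B v w + C v w" and B = D]
      hamiltonian_add[where A = B and B = C] by simp
  have "hamiltonian n (\<lambda>v w. switch A x y a b v w + single_edge x y v w + single_edge a b v w) \<sigma>
      = hamiltonian n (\<lambda>v w. A v w + single_edge x a v w + single_edge y b v w) \<sigma>"
    using switch_add_removed_edges[OF A ab(3,4) edges] by simp
  then have "hamiltonian n (switch A x y a b) \<sigma> + hamiltonian n (single_edge x y) \<sigma>
      + hamiltonian n (single_edge a b) \<sigma>
    = hamiltonian n A \<sigma> + hamiltonian n (single_edge x a) \<sigma> + hamiltonian n (single_edge y b) \<sigma>"
    unfolding add3 .
  moreover have "0 \<le> hamiltonian n (single_edge x y) \<sigma>" "0 \<le> hamiltonian n (single_edge a b) \<sigma>"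
    "hamiltonian n (single_edge x a) \<sigma> \<le> 1" "hamiltonian n (single_edge y b) \<sigma> \<le> 1"
    using hamiltonian_single_edge[OF \<sigma>] xy ab by auto
  ultimately show ?thesis by linarith
qed

definition neighbours :: "nat \<Rightarrow> (nat \<Rightarrow> nat \<Rightarrow> nat) \<Rightarrow> nat \<Rightarrow> nat set" where
  "neighbours n A v = {w. w < n \<and> 1 \<le> A v w}"

lemma card_neighbours_le:
  assumes "regular_multigraph n d A" "v < n"
  shows "card (neighbours n A v) \<le> d"
proof -
  have "card (neighbours n A v) = (\<Sum>w<n. if 1 \<le> A v w then 1 else 0)"
    by (simp add: neighbours_def sum.If_cases Int_def)
  also have "\<dots> \<le> (\<Sum>w<n. A v w)" by (intro sum_mono) auto
  also have "\<dots> \<le> d" using regular_multigraph_degree[OF assms] by linarith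
  finally show ?thesis .
qed

lemma neighbours_nonempty:
  assumes "regular_multigraph n d A" "v < n" "d \<ge> 1"
  shows "neighbours n A v \<noteq> {}"
proof
  assume "neighbours n A v = {}"
  then have "\<forall>w<n. A v w = 0" by (auto simp: neighbours_def)
  then show False using regular_multigraph_degree[OF assms(1,2)] assms(2,3) by simp
qed

definition switch_pairs :: "nat \<Rightarrow> (nat \<Rightarrow> nat \<Rightarrow> nat) \<Rightarrow> nat set \<Rightarrow> (nat \<times> nat) set" where
  "switch_pairs n A V = {(a, b). a < n \<and> b < n \<and> a \<notin> V \<and> b \<notin> V \<and> 1 \<le> A a b}"

lemma finite_switch_pairs: "finite (switch_pairs n A V)"
  by (rule finite_subset[of _ "{..<n} \<times> {..<n}"]) (auto simp: switch_pairs_def)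

text \<open>Every vertex outside \<open>V\<close> and its neighbourhood starts an edge avoiding \<open>V\<close>.\<close>

lemma card_switch_pairs_ge:
  assumes A: "regular_multigraph n d A" and V: "finite V" and d: "d \<ge> 1"
  shows "n - (d + 1) * card V \<le> card (switch_pairs n A V)"
proof -
  define N where "N = (\<Union>v\<in>V \<inter> {..<n}. neighbours n A v)"
  define U where "U = {..<n} - (V \<union> N)"
  have "card N \<le> (\<Sum>v\<in>V \<inter> {..<n}. card (neighbours n A v))"
    unfolding N_def using V by (intro card_UN_le) auto
  also have "\<dots> \<le> (\<Sum>v\<in>V \<inter> {..<n}. d)"
    using card_neighbours_le[OF A] by (intro sum_mono) auto
  also have "\<dots> \<le> card V * d"
    using V by (simp add: card_mono)
  finally have "card N \<le> card V * d" .
  moreover have "finite N" unfolding N_def by (auto simp: neighbours_def)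
  then have "n - card (V \<union> N) \<le> card U"
    unfolding U_def using V by (metis card_lessThan diff_card_le_card_Diff finite_UnI)
  moreover have "card (V \<union> N) \<le> card V + card N" by (rule card_Un_le)
  ultimately have U: "n - (d + 1) * card V \<le> card U" by (simp add: algebra_simps)
  define nb where "nb a = (SOME b. b \<in> neighbours n A a)" for a
  have nb: "nb a \<in> neighbours n A a" if "a < n" for a
    unfolding nb_def using neighbours_nonempty[OF A that d] by (simp add: some_in_eq)
  have "(\<lambda>a. (a, nb a)) ` U \<subseteq> switch_pairs n A V"
  proof safe
    fix a assume a: "a \<in> U"
    then have "a < n" "a \<notin> V" "a \<notin> N" by (auto simp: U_def)
    moreover have "A (nb a) a = A a (nb a)" using A by (simp add: regular_multigraph_def)
    ultimately show "(a, nb a) \<in> switch_pairs n A V"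
      using nb[of a] by (force simp: switch_pairs_def neighbours_def N_def)
  qed
  then have "card ((\<lambda>a. (a, nb a)) ` U) \<le> card (switch_pairs n A V)"
    by (intro card_mono finite_switch_pairs)
  then show ?thesis using U by (simp add: card_image inj_on_def)
qed

lemma switch_injective:
  assumes A: "regular_multigraph n d A" "regular_multigraph n d A'"
    and ab: "a \<notin> {x, y}" "b \<notin> {x, y}"
    and edges: "1 \<le> A x y" "1 \<le> A a b" "1 \<le> A' x y" "1 \<le> A' a b"
    and eq: "switch A x y a b = switch A' x y a b"
  shows "A = A'"
proof (intro ext)
  fix v w
  show "A v w = A' v w"
    using switch_add_removed_edges[OF A(1) ab edges(1,2), of v w]
      switch_add_removed_edges[OF A(2) ab edges(3,4), of v w] eq by simp
qed

lemma switch_properties: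
  assumes A: "A \<in> outcomes n d" "contains_edges ((x, y) # es) A" and xy: "x < n" "y < n"
    and ab: "(a, b) \<in> switch_pairs n A (edge_vertices ((x, y) # es))"
  shows "switch A x y a b \<in> outcomes n d" "contains_edges es (switch A x y a b)"
    "(a, b) \<in> neighbours n (switch A x y a b) x \<times> neighbours n (switch A x y a b) y"
    "\<sigma> \<in> spins n \<Longrightarrow> hamiltonian n (switch A x y a b) \<sigma> \<le> hamiltonian n A \<sigma> + 2"
proof -
  have R: "regular_multigraph n d A" using A(1) by (simp add: outcomes_eq_regular_multigraphs)
  have ab': "a < n" "b < n" "a \<notin> {x, y}" "b \<notin> {x, y}" "a \<notin> edge_vertices es"
    "b \<notin> edge_vertices es" "1 \<le> A a b"
    using ab by (auto simp: switch_pairs_def)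
  note edge = contains_edges_Cons_edge[OF A(2)]
  show "switch A x y a b \<in> outcomes n d"
    using regular_multigraph_switch[OF R xy ab'(1-4) edge ab'(7)]
    by (simp add: outcomes_eq_regular_multigraphs)
  show "contains_edges es (switch A x y a b)"
    by (rule contains_edges_switch[OF R ab'(3-6) ab'(7) A(2)])
  show "(a, b) \<in> neighbours n (switch A x y a b) x \<times> neighbours n (switch A x y a b) y"
    using switch_new_edges[OF R ab'(3,4) edge ab'(7)] ab'(1,2) by (simp add: neighbours_def)
  show "hamiltonian n (switch A x y a b) \<sigma> \<le> hamiltonian n A \<sigma> + 2" if "\<sigma> \<in> spins n"
    by (rule hamiltonian_switch_le[OF R that xy ab'(1-4) edge ab'(7)])
qed

lemma inj_on_switch:
  assumes "{x, y} \<subseteq> V"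
  shows "inj_on (\<lambda>(A, a, b). (switch A x y a b, a, b))
    (SIGMA A:{A \<in> outcomes n d. contains_edges ((x, y) # es) A}. switch_pairs n A V)"
    (is "inj_on ?\<Phi> ?D")
proof (rule inj_onI)
  fix z z' assume z: "z \<in> ?D" and z': "z' \<in> ?D" and eq: "?\<Phi> z = ?\<Phi> z'"
  obtain A a b A' a' b' where zz: "z = (A, a, b)" "z' = (A', a', b')" by (cases z, cases z')
  with eq have "a' = a" "b' = b" "switch A x y a b = switch A' x y a b" by auto
  with z z' zz assms contains_edges_Cons_edge[of x y es A] contains_edges_Cons_edge[of x y es A']
  have "A = A'"
    by (intro switch_injective[of n d A A' a x y b])
      (auto simp: outcomes_eq_regular_multigraphs switch_pairs_def)
  then show "z = z'" using zz \<open>a' = a\<close> \<open>b' = b\<close> by simp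
qed

lemma weighted_double_counting:
  fixes w :: "'a \<Rightarrow> real" and P Q :: "'a \<Rightarrow> 'b set" and \<Phi> :: "'a \<times> 'b \<Rightarrow> 'a \<times> 'b"
  assumes fin: "finite S" "finite T" "\<And>A. A \<in> S \<Longrightarrow> finite (P A)" "\<And>B. B \<in> T \<Longrightarrow> finite (Q B)"
    and w: "\<And>A. 0 \<le> w A"
    and \<Phi>: "inj_on \<Phi> (Sigma S P)" "\<Phi> ` Sigma S P \<subseteq> Sigma T Q"
    and c: "0 \<le> c" "\<And>z. z \<in> Sigma S P \<Longrightarrow> w (fst z) \<le> c * w (fst (\<Phi> z))"
    and p: "\<And>A. A \<in> S \<Longrightarrow> p \<le> real (card (P A))"
    and q: "\<And>B. B \<in> T \<Longrightarrow> real (card (Q B)) \<le> q"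
  shows "p * (\<Sum>A\<in>S. w A) \<le> c * q * (\<Sum>B\<in>T. w B)"
proof -
  have fin_Sigma: "finite (Sigma S P)" "finite (Sigma T Q)" using fin by auto
  have "p * (\<Sum>A\<in>S. w A) \<le> (\<Sum>A\<in>S. real (card (P A)) * w A)"
    unfolding sum_distrib_left by (intro sum_mono mult_right_mono p w)
  also have "\<dots> = (\<Sum>A\<in>S. \<Sum>b\<in>P A. w A)" by simp
  also have "\<dots> = (\<Sum>z\<in>Sigma S P. w (fst z))"
    using fin by (subst sum.Sigma) (auto simp: split_def)
  also have "\<dots> \<le> (\<Sum>z\<in>Sigma S P. c * w (fst (\<Phi> z)))"
    by (intro sum_mono c)
  also have "\<dots> = c * (\<Sum>z\<in>\<Phi> ` Sigma S P. w (fst z))"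
    by (simp add: sum_distrib_left sum.reindex[OF \<Phi>(1)])
  also have "\<dots> \<le> c * (\<Sum>z\<in>Sigma T Q. w (fst z))"
    by (intro mult_left_mono sum_mono2 fin_Sigma \<Phi>(2) w c)
  also have "(\<Sum>z\<in>Sigma T Q. w (fst z)) = (\<Sum>B\<in>T. \<Sum>b\<in>Q B. w B)"
    using fin by (subst sum.Sigma) (auto simp: split_def)
  also have "\<dots> = (\<Sum>B\<in>T. real (card (Q B)) * w B)" by simp
  also have "c * \<dots> \<le> c * (\<Sum>B\<in>T. q * w B)"
    by (intro mult_left_mono sum_mono mult_right_mono q w c)
  finally show ?thesis by (simp add: sum_distrib_left mult.assoc)
qed

definition gibbs_weight ::
  "nat \<Rightarrow> nat \<Rightarrow> real \<Rightarrow> (nat \<Rightarrow> int) \<Rightarrow> ((nat \<Rightarrow> nat \<Rightarrow> nat) \<Rightarrow> bool) \<Rightarrow> real" where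
  "gibbs_weight n d \<beta> \<sigma> P = (\<Sum>G\<in>{G \<in> outcomes n d. P G}. exp (- \<beta> * hamiltonian n G \<sigma>))"

lemma gibbs_weight_eq_sum:
  "gibbs_weight n d \<beta> \<sigma> P = (\<Sum>G\<in>outcomes n d. if P G then exp (- \<beta> * hamiltonian n G \<sigma>) else 0)"
  unfolding gibbs_weight_def by (rule sum.inter_filter[OF finite_outcomes])

text \<open>The switching \<open>(A, (a, b)) \<mapsto> (switch A x y a b, (a, b))\<close> removes the edge \<open>xy\<close> from
  graphs containing it; there are at least \<open>n/2\<close> choices of \<open>ab\<close> forward and at most \<open>d\<^sup>2\<close>
  backward, and the energy rises by at most 2.\<close>

lemma gibbs_weight_contains_edges_Cons:
  assumes \<sigma>: "\<sigma> \<in> spins n" and \<beta>: "0 \<le> \<beta>" and xy: "x < n" "y < n" and d: "1 \<le> d"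
    and n: "2 * (d + 1) * (2 * length es + 2) \<le> n"
  shows "real n / 2 * gibbs_weight n d \<beta> \<sigma> (contains_edges ((x, y) # es))
    \<le> exp (2 * \<beta>) * real (d\<^sup>2) * gibbs_weight n d \<beta> \<sigma> (contains_edges es)"
proof -
  define V where "V = edge_vertices ((x, y) # es)"
  define w where "w A = exp (- \<beta> * hamiltonian n A \<sigma>)" for A
  define \<Phi> where "\<Phi> = (\<lambda>(A, a, b). (switch A x y a b, a, b))"
  let ?S = "{A \<in> outcomes n d. contains_edges ((x, y) # es) A}"
  let ?T = "{A \<in> outcomes n d. contains_edges es A}"
  let ?P = "\<lambda>A. switch_pairs n A V"
  let ?Q = "\<lambda>B. neighbours n B x \<times> neighbours n B y"
  have regular: "regular_multigraph n d A" if "A \<in> outcomes n d" for A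
    using that by (simp add: outcomes_eq_regular_multigraphs)
  have "2 * ((d + 1) * card V) \<le> 2 * (d + 1) * (2 * length ((x, y) # es))"
    unfolding V_def by (metis card_edge_vertices mult.assoc mult_le_mono2)
  then have V: "finite V" "2 * ((d + 1) * card V) \<le> n"
    using n by (simp_all add: V_def edge_vertices_def)
  have "real n / 2 * (\<Sum>A\<in>?S. w A) \<le> exp (2 * \<beta>) * real (d\<^sup>2) * (\<Sum>B\<in>?T. w B)"
  proof (rule weighted_double_counting[where P = ?P and Q = ?Q and \<Phi> = \<Phi>])
    show "inj_on \<Phi> (Sigma ?S ?P)" unfolding \<Phi>_def V_def by (rule inj_on_switch) auto
    show "\<Phi> ` Sigma ?S ?P \<subseteq> Sigma ?T ?Q"
      using switch_properties(1-3)[OF _ _ xy] by (auto simp: \<Phi>_def V_def)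
    show "w (fst z) \<le> exp (2 * \<beta>) * w (fst (\<Phi> z))" if "z \<in> Sigma ?S ?P" for z
    proof -
      obtain A a b where z: "z = (A, a, b)" by (cases z) auto
      with that have H: "hamiltonian n (switch A x y a b) \<sigma> \<le> hamiltonian n A \<sigma> + 2"
        using switch_properties(4)[OF _ _ xy _ \<sigma>] by (auto simp: V_def)
      have "- \<beta> * hamiltonian n A \<sigma> \<le> 2 * \<beta> + - \<beta> * hamiltonian n (switch A x y a b) \<sigma>"
        using mult_left_mono[OF H \<beta>] by (simp add: algebra_simps)
      then show ?thesis unfolding z \<Phi>_def w_def by (simp add: exp_add[symmetric])
    qed
    show "real n / 2 \<le> real (card (?P A))" if "A \<in> ?S" for A
      using card_switch_pairs_ge[OF regular V(1) d, of A] that V(2) by auto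
    show "real (card (?Q B)) \<le> real (d\<^sup>2)" if "B \<in> ?T" for B
    proof -
      have "card (?Q B) \<le> d * d"
        using card_neighbours_le[OF regular xy(1)] card_neighbours_le[OF regular xy(2)] that
        by (simp add: card_cartesian_product mult_le_mono)
      then show ?thesis by (simp add: power2_eq_square flip: of_nat_mult)
    qed
  qed (auto simp: w_def finite_outcomes finite_switch_pairs neighbours_def)
  then show ?thesis by (simp add: gibbs_weight_def w_def)
qed

lemma gibbs_weight_contains_edges:
  assumes \<sigma>: "\<sigma> \<in> spins n" and \<beta>: "0 \<le> \<beta>" and d: "1 \<le> d"
    and es: "\<forall>(p, q)\<in>set es. p < n \<and> q < n" and n: "2 * (d + 1) * (2 * length es + 2) \<le> n"
  shows "gibbs_weight n d \<beta> \<sigma> (contains_edges es)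
    \<le> (2 * exp (2 * \<beta>) * real (d\<^sup>2) / real n) ^ length es * gibbs_weight n d \<beta> \<sigma> (\<lambda>_. True)"
  using es n
proof (induction es)
  case Nil
  then show ?case by (simp add: gibbs_weight_def contains_edges_def)
next
  case (Cons e es)
  obtain x y where e: "e = (x, y)" by (cases e)
  let ?c = "2 * exp (2 * \<beta>) * real (d\<^sup>2) / real n"
  have xy: "x < n" "y < n" using Cons.prems(1) e by auto
  have "n > 0" using Cons.prems(2) by (simp add: gr0I)
  have "real n / 2 * gibbs_weight n d \<beta> \<sigma> (contains_edges ((x, y) # es))
    \<le> exp (2 * \<beta>) * real (d\<^sup>2) * gibbs_weight n d \<beta> \<sigma> (contains_edges es)"
    using Cons.prems(2) by (intro gibbs_weight_contains_edges_Cons[OF \<sigma> \<beta> xy d]) simp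
  then have "gibbs_weight n d \<beta> \<sigma> (contains_edges ((x, y) # es))
      \<le> ?c * gibbs_weight n d \<beta> \<sigma> (contains_edges es)"
    using \<open>n > 0\<close> by (simp add: field_simps)
  also have "\<dots> \<le> ?c * (?c ^ length es * gibbs_weight n d \<beta> \<sigma> (\<lambda>_. True))"
    using Cons by (intro mult_left_mono) auto
  finally show ?case using e by (simp add: mult.assoc)
qed

definition cycle_walk :: "nat \<Rightarrow> (nat \<Rightarrow> nat) \<Rightarrow> (nat \<times> nat) list" where
  "cycle_walk l x = map (\<lambda>i. (x i, x (Suc i mod l))) [0..<l]"

definition cycle_edges :: "nat \<Rightarrow> (nat \<Rightarrow> nat) \<Rightarrow> (nat \<Rightarrow> nat) \<Rightarrow> (nat \<times> nat \<times> nat) set" where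
  "cycle_edges l x k = (\<lambda>i. (min (x i) (x (Suc i mod l)), max (x i) (x (Suc i mod l)), k i)) ` {..<l}"

lemma edge_mult_cycle_walk:
  "edge_mult (cycle_walk l x) p q = card {i. i < l \<and> {x i, x (Suc i mod l)} = {p, q}}"
proof -
  have "edge_mult (cycle_walk l x) p q = (\<Sum>i<l. single_edge (x i) (x (Suc i mod l)) p q)"
    by (simp add: edge_mult_def cycle_walk_def sum_list_sum_nth atLeast0LessThan)
  also have "\<dots> = card {i. i < l \<and> {x i, x (Suc i mod l)} = {p, q}}"
    by (simp add: single_edge_def sum.If_cases Int_def eq_commute)
  finally show ?thesis .
qed

lemma regular_multigraph_le_degree:
  assumes A: "regular_multigraph n d A" and v: "v < n"
  shows "A v w \<le> d"
proof (cases "w < n")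
  case True
  then have "A v w \<le> (\<Sum>w<n. A v w)" by (intro member_le_sum) auto
  then show ?thesis using regular_multigraph_degree[OF A v] by linarith
qed (use A in \<open>simp add: regular_multigraph_def\<close>)

lemma edge_insts_doubleton:
  assumes sym: "\<And>v w. A v w = A w v"
    and e: "(v, w, j) \<in> edge_insts n A" and vw: "{v, w} = {p, q}"
  shows "(v, w, j) = (min p q, max p q, j) \<and> p < n \<and> q < n \<and> j < A p q"
proof -
  have "A v w = A p q" using vw sym by (auto simp: doubleton_eq_iff)
  with e vw show ?thesis by (auto simp: edge_insts_def doubleton_eq_iff min_def max_def)
qed

lemma contains_edges_cycle_walk:
  assumes sym: "\<And>v w. A v w = A w v"
    and inj: "inj_on (\<lambda>i. ({x i, x (Suc i mod l)}, k i)) {..<l}"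
    and k: "\<And>i. i < l \<Longrightarrow> k i < A (x i) (x (Suc i mod l))"
  shows "contains_edges (cycle_walk l x) A"
  unfolding contains_edges_def edge_mult_cycle_walk
proof (intro allI)
  fix p q
  define I where "I = {i. i < l \<and> {x i, x (Suc i mod l)} = {p, q}}"
  have "inj_on k I" using inj by (auto simp: I_def inj_on_def)
  moreover have "k ` I \<subseteq> {..<A p q}" using k sym by (auto simp: I_def doubleton_eq_iff)
  ultimately show "card I \<le> A p q" by (metis card_inj_on_le card_lessThan finite_lessThan)
qed

text \<open>A cycle is encoded by its closed walk \<open>x\<close> together with the edge labels \<open>k\<close> picking
  one of the parallel edges at each step.\<close>

lemma cycle_encoding:
  assumes A: "regular_multigraph n d A" and l: "1 \<le> l"
    and S: "S \<subseteq> edge_insts n A" "is_cycle l S"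
  obtains x k where "x \<in> {..<l} \<rightarrow>\<^sub>E {..<n}" "contains_edges (cycle_walk l x) A"
    "k \<in> {..<l} \<rightarrow>\<^sub>E {..<d}" "S = cycle_edges l x k"
proof -
  obtain x g where bij: "bij_betw g {..<l} S"
    and walk: "\<forall>i<l. case g i of (v, w, k) \<Rightarrow> {v, w} = {x i, x ((i + 1) mod l)}"
    using S(2) unfolding is_cycle_def by blast
  define k where "k i = snd (snd (g i))" for i
  have A_sym: "A v w = A w v" for v w using A by (simp add: regular_multigraph_def)
  have step: "g i = (min (x i) (x (Suc i mod l)), max (x i) (x (Suc i mod l)), k i)
      \<and> x i < n \<and> x (Suc i mod l) < n \<and> k i < A (x i) (x (Suc i mod l))" if i: "i < l" for i
  proof -
    obtain v w j where g: "g i = (v, w, j)" by (cases "g i")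
    have "g i \<in> S" using bij i by (auto dest: bij_betwE)
    then have "(v, w, j) \<in> edge_insts n A" using S(1) g by auto
    moreover have "{v, w} = {x i, x (Suc i mod l)}" using walk[rule_format, OF i] by (simp add: g)
    ultimately show ?thesis using edge_insts_doubleton[where A = A, OF A_sym] by (simp add: g k_def)
  qed
  define x0 where "x0 = restrict x {..<l}"
  have x0: "x0 i = x i" "x0 (Suc i mod l) = x (Suc i mod l)" if "i < l" for i
    using that l by (simp_all add: x0_def)
  have "x0 \<in> {..<l} \<rightarrow>\<^sub>E {..<n}" using step by (auto simp: x0_def)
  moreover have "contains_edges (cycle_walk l x0) A"
  proof (rule contains_edges_cycle_walk)
    show "inj_on (\<lambda>i. ({x0 i, x0 (Suc i mod l)}, k i)) {..<l}"
    proof (rule inj_onI)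
      fix i j assume "i \<in> {..<l}" "j \<in> {..<l}"
        "({x0 i, x0 (Suc i mod l)}, k i) = ({x0 j, x0 (Suc j mod l)}, k j)"
      then have "g i = g j" "i < l" "j < l"
        using step x0 by (auto simp: doubleton_eq_iff min_def max_def)
      then show "i = j" using bij by (auto simp: bij_betw_def inj_on_def)
    qed
  qed (use A_sym step x0 in auto)
  moreover have "restrict k {..<l} \<in> {..<l} \<rightarrow>\<^sub>E {..<d}"
  proof (rule PiE_I)
    fix i assume "i \<in> {..<l}"
    then have "k i < A (x i) (x (Suc i mod l))" "x i < n" using step by auto
    then show "restrict k {..<l} i \<in> {..<d}"
      using \<open>i \<in> {..<l}\<close> regular_multigraph_le_degree[OF A] by (auto intro: less_le_trans)
  qed simp
  moreover have "S = cycle_edges l x0 (restrict k {..<l})"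
  proof -
    have "S = g ` {..<l}" using bij by (simp add: bij_betw_def)
    then show ?thesis using step x0 by (auto simp: cycle_edges_def intro!: image_cong)
  qed
  ultimately show ?thesis by (rule that)
qed

lemma num_cycles_le:
  assumes A: "regular_multigraph n d A" and l: "1 \<le> l"
  shows "num_cycles n A l \<le> d ^ l * card {x \<in> {..<l} \<rightarrow>\<^sub>E {..<n}. contains_edges (cycle_walk l x) A}"
proof -
  define X where "X = {x \<in> {..<l} \<rightarrow>\<^sub>E {..<n}. contains_edges (cycle_walk l x) A}"
  define T where "T = X \<times> ({..<l} \<rightarrow>\<^sub>E {..<d})"
  have fin: "finite T" unfolding T_def X_def by (auto simp: finite_PiE)
  have "{S. S \<subseteq> edge_insts n A \<and> is_cycle l S} \<subseteq> (\<lambda>(x, k). cycle_edges l x k) ` T"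
  proof safe
    fix S assume "S \<subseteq> edge_insts n A" "is_cycle l S"
    then obtain x k where "x \<in> X" "k \<in> {..<l} \<rightarrow>\<^sub>E {..<d}" "S = cycle_edges l x k"
      unfolding X_def by (rule cycle_encoding[OF A l]) blast
    then show "S \<in> (\<lambda>(x, k). cycle_edges l x k) ` T" unfolding T_def by (simp add: image_iff) blast
  qed
  then have "num_cycles n A l \<le> card ((\<lambda>(x, k). cycle_edges l x k) ` T)"
    unfolding num_cycles_def using fin by (intro card_mono) auto
  also have "\<dots> \<le> card T" using fin by (rule card_image_le)
  also have "\<dots> = card X * d ^ l" by (simp add: T_def card_cartesian_product card_PiE)
  finally show ?thesis by (simp add: X_def mult.commute)
qed

lemma weighted_num_cycles_le:
  assumes \<sigma>: "\<sigma> \<in> spins n" and \<beta>: "0 \<le> \<beta>" and d: "1 \<le> d" and l: "1 \<le> l"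
    and n: "2 * (d + 1) * (2 * l + 2) \<le> n"
  shows "(\<Sum>G\<in>outcomes n d. exp (- \<beta> * hamiltonian n G \<sigma>) * real (num_cycles n G l))
    \<le> (real d * (2 * exp (2 * \<beta>) * real (d\<^sup>2))) ^ l * gibbs_weight n d \<beta> \<sigma> (\<lambda>_. True)"
proof -
  define w where "w G = exp (- \<beta> * hamiltonian n G \<sigma>)" for G
  define c where "c = 2 * exp (2 * \<beta>) * real (d\<^sup>2)"
  define W where "W = {..<l} \<rightarrow>\<^sub>E {..<n}"
  have fin: "finite W" "finite (outcomes n d)" by (simp_all add: W_def finite_PiE finite_outcomes)
  have "n > 0" using n by (simp add: gr0I)
  have "(\<Sum>G\<in>outcomes n d. w G * real (num_cycles n G l))
      \<le> (\<Sum>G\<in>outcomes n d. w G * (real d ^ l * (\<Sum>x\<in>W. if contains_edges (cycle_walk l x) G then 1 else 0)))"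
  proof (intro sum_mono mult_left_mono)
    fix G assume "G \<in> outcomes n d"
    then have "num_cycles n G l \<le> d ^ l * card {x \<in> W. contains_edges (cycle_walk l x) G}"
      unfolding W_def by (intro num_cycles_le l) (simp add: outcomes_eq_regular_multigraphs)
    then show "real (num_cycles n G l)
        \<le> real d ^ l * (\<Sum>x\<in>W. if contains_edges (cycle_walk l x) G then 1 else 0)"
      using fin(1) by (simp add: sum.If_cases Int_def) (metis of_nat_le_iff of_nat_mult of_nat_power)
  qed (simp add: w_def)
  also have "\<dots> = real d ^ l * (\<Sum>x\<in>W. gibbs_weight n d \<beta> \<sigma> (contains_edges (cycle_walk l x)))"
    by (simp add: gibbs_weight_eq_sum w_def sum_distrib_left sum_distrib_right if_distrib
        sum.swap[of _ W] mult_ac cong: if_cong)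
  also have "\<dots> \<le> real d ^ l * (\<Sum>x\<in>W. (c / real n) ^ l * gibbs_weight n d \<beta> \<sigma> (\<lambda>_. True))"
  proof (intro mult_left_mono sum_mono)
    fix x assume "x \<in> W"
    then have walk: "\<forall>(p, q)\<in>set (cycle_walk l x). p < n \<and> q < n"
      using l by (auto simp: W_def cycle_walk_def PiE_iff)
    have len: "length (cycle_walk l x) = l" by (simp add: cycle_walk_def)
    show "gibbs_weight n d \<beta> \<sigma> (contains_edges (cycle_walk l x))
        \<le> (c / real n) ^ l * gibbs_weight n d \<beta> \<sigma> (\<lambda>_. True)"
      using gibbs_weight_contains_edges[OF \<sigma> \<beta> d walk] n unfolding len c_def by simp
  qed simp
  also have "\<dots> = (real d * c) ^ l * gibbs_weight n d \<beta> \<sigma> (\<lambda>_. True)"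
    using \<open>n > 0\<close> by (simp add: W_def card_PiE power_divide power_mult_distrib)
  finally show ?thesis by (simp add: w_def c_def)
qed

lemma weighted_markov:
  fixes w X :: "'a \<Rightarrow> real"
  assumes S: "finite S" and w: "\<And>x. x \<in> S \<Longrightarrow> 0 \<le> w x" and X: "\<And>x. x \<in> S \<Longrightarrow> 0 \<le> X x"
    and t: "0 < t" and Z: "0 < (\<Sum>x\<in>S. w x)"
    and mean: "(\<Sum>x\<in>S. w x * X x) \<le> K * (\<Sum>x\<in>S. w x)"
  shows "1 - K / t \<le> (\<Sum>x\<in>{x \<in> S. X x \<le> t}. w x) / (\<Sum>x\<in>S. w x)"
proof -
  define bad where "bad = (\<Sum>x\<in>{x \<in> S. \<not> X x \<le> t}. w x)"
  have split: "(\<Sum>x\<in>S. w x) = (\<Sum>x\<in>{x \<in> S. X x \<le> t}. w x) + bad"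
    using sum.Int_Diff[OF S, of w "{x. X x \<le> t}"] by (simp add: bad_def Int_def set_diff_eq)
  have "t * bad = (\<Sum>x\<in>{x \<in> S. \<not> X x \<le> t}. w x * t)"
    by (simp add: bad_def sum_distrib_left mult.commute)
  also have "\<dots> \<le> (\<Sum>x\<in>{x \<in> S. \<not> X x \<le> t}. w x * X x)"
    using w by (intro sum_mono mult_left_mono) auto
  also have "\<dots> \<le> (\<Sum>x\<in>S. w x * X x)"
    using S w X by (intro sum_mono2) auto
  finally have "t * bad \<le> K * (\<Sum>x\<in>S. w x)" using mean by linarith
  then have "bad / (\<Sum>x\<in>S. w x) \<le> K / t" using t Z by (simp add: field_simps)
  then show ?thesis using split Z by (simp add: field_simps)
qed

lemma planted_prob_ge:
  assumes "\<And>\<sigma>. \<sigma> \<in> spins n \<Longrightarrow> p \<le> gibbs_weight n d \<beta> \<sigma> P / gibbs_weight n d \<beta> \<sigma> (\<lambda>_. True)"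
  shows "p \<le> planted_prob n d \<beta> P"
proof -
  have spins: "finite (spins n)" "spins n \<noteq> {}"
    by (simp_all add: spins_def finite_PiE PiE_eq_empty_iff)
  have "p = (\<Sum>\<sigma>\<in>spins n. 1 / real (card (spins n)) * p)" using spins by simp
  also have "\<dots> \<le> (\<Sum>\<sigma>\<in>spins n. 1 / real (card (spins n)) *
      (gibbs_weight n d \<beta> \<sigma> P / gibbs_weight n d \<beta> \<sigma> (\<lambda>_. True)))"
    using assms by (intro sum_mono mult_left_mono) auto
  finally show ?thesis by (simp add: planted_prob_def gibbs_weight_def)
qed

definition short_cycle_bound :: "nat \<Rightarrow> real \<Rightarrow> nat \<Rightarrow> real" where
  "short_cycle_bound d \<beta> L = (\<Sum>l\<in>{1..L}. (real d * (2 * exp (2 * \<beta>) * real (d\<^sup>2))) ^ l)"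

lemma short_cycles_fraction_ge:
  assumes \<sigma>: "\<sigma> \<in> spins n" and \<beta>: "0 \<le> \<beta>" and d: "1 \<le> d" and t: "0 < t"
    and n: "2 * (d + 1) * (2 * L + 2) \<le> n" and even: "even (d * n)"
  shows "1 - short_cycle_bound d \<beta> L / t
    \<le> gibbs_weight n d \<beta> \<sigma> (\<lambda>G. real (\<Sum>l\<in>{1..L}. num_cycles n G l) \<le> t)
      / gibbs_weight n d \<beta> \<sigma> (\<lambda>_. True)"
proof -
  define w where "w G = exp (- \<beta> * hamiltonian n G \<sigma>)" for G
  have Z: "gibbs_weight n d \<beta> \<sigma> (\<lambda>_. True) = (\<Sum>G\<in>outcomes n d. w G)"
    by (simp add: gibbs_weight_def w_def)
  have "outcomes n d \<noteq> {}"
    using regular_multigraph_exists[OF even] by (auto simp: outcomes_eq_regular_multigraphs)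
  then have "0 < (\<Sum>G\<in>outcomes n d. w G)"
    by (intro sum_pos finite_outcomes) (auto simp: w_def)
  moreover have "(\<Sum>G\<in>outcomes n d. w G * real (\<Sum>l\<in>{1..L}. num_cycles n G l))
      = (\<Sum>l\<in>{1..L}. \<Sum>G\<in>outcomes n d. w G * real (num_cycles n G l))"
    by (simp add: sum_distrib_left) (rule sum.swap)
  moreover have "\<dots> \<le> (\<Sum>l\<in>{1..L}. (real d * (2 * exp (2 * \<beta>) * real (d\<^sup>2))) ^ l
      * gibbs_weight n d \<beta> \<sigma> (\<lambda>_. True))"
  proof (intro sum_mono)
    fix l assume l: "l \<in> {1..L}"
    have "2 * (d + 1) * (2 * l + 2) \<le> 2 * (d + 1) * (2 * L + 2)"
      using l by (intro mult_le_mono2) simp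
    then show "(\<Sum>G\<in>outcomes n d. w G * real (num_cycles n G l))
        \<le> (real d * (2 * exp (2 * \<beta>) * real (d\<^sup>2))) ^ l * gibbs_weight n d \<beta> \<sigma> (\<lambda>_. True)"
      unfolding w_def using l n by (intro weighted_num_cycles_le[OF \<sigma> \<beta> d]) auto
  qed
  ultimately have "1 - short_cycle_bound d \<beta> L / t
      \<le> (\<Sum>G\<in>{G \<in> outcomes n d. real (\<Sum>l\<in>{1..L}. num_cycles n G l) \<le> t}. w G)
        / (\<Sum>G\<in>outcomes n d. w G)"
    unfolding short_cycle_bound_def
    by (intro weighted_markov[OF finite_outcomes _ _ t]) (auto simp: w_def Z sum_distrib_right sum_nonneg)
  then show ?thesis by (simp add: Z gibbs_weight_def w_def)
qed

theorem lemma4p8: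
  fixes d L :: nat and \<beta> :: real
  assumes "d \<ge> 3" and "\<beta> > 0"
  shows "\<exists>C > 0. \<forall>\<epsilon> > 0. \<exists>N. \<forall>n \<ge> N. even (d * n) \<longrightarrow>
           planted_prob n d \<beta>
             (\<lambda>G. real (\<Sum>l\<in>{1..L}. num_cycles n G l) \<le> C * ln (real n))
           \<ge> 1 - \<epsilon>"
proof (intro exI[of _ "1 :: real"] conjI allI impI)
  fix \<epsilon> :: real assume \<epsilon>: "\<epsilon> > 0"
  define K where "K = short_cycle_bound d \<beta> L"
  define N where "N = 2 * (d + 1) * (2 * L + 2) + nat \<lceil>exp (K / \<epsilon>)\<rceil> + 2"
  show "\<exists>N. \<forall>n \<ge> N. even (d * n) \<longrightarrow>
    1 - \<epsilon> \<le> planted_prob n d \<beta> (\<lambda>G. real (\<Sum>l\<in>{1..L}. num_cycles n G l) \<le> 1 * ln (real n))"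
  proof (intro exI[of _ N] allI impI)
    fix n assume n: "N \<le> n" and even: "even (d * n)"
    then have "exp (K / \<epsilon>) \<le> real n" "2 \<le> n" unfolding N_def by linarith+
    then have "K / \<epsilon> \<le> ln (real n)" using ln_mono[OF _ exp_gt_zero] by fastforce
    then have "1 - \<epsilon> \<le> 1 - K / (1 * ln (real n))" using \<epsilon> \<open>2 \<le> n\<close> by (simp add: field_simps)
    moreover have bounds: "0 \<le> \<beta>" "1 \<le> d" "0 < 1 * ln (real n)" "2 * (d + 1) * (2 * L + 2) \<le> n"
      using n assms \<open>2 \<le> n\<close> unfolding N_def by auto
    ultimately show "1 - \<epsilon> \<le> planted_prob n d \<beta>
        (\<lambda>G. real (\<Sum>l\<in>{1..L}. num_cycles n G l) \<le> 1 * ln (real n))"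
      using short_cycles_fraction_ge[OF _ bounds even, folded K_def]
      by (intro planted_prob_ge) (blast intro: order_trans)
  qed
qed simp

end
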